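(* For all $m,n\in\mathbb{N}$ with $mn>1$ and every $\boldsymbol{\gamma}\in[0,1)^m$, we have $\Omega^{\boldsymbol{\gamma}}(m,n)\neq\emptyset$.
   Context: $[0,1)^{m\times n}$ is the set of real $m\times n$ matrices with entries in $[0,1)$. For $\boldsymbol{x}\in\mathbb{R}^n$, $\|\boldsymbol{x}\|=\max_i|x_i|$; for $\boldsymbol{y}\in\mathbb{R}^m$, $\langle\boldsymbol{y}\rangle=\min_{\boldsymbol{p}\in\mathbb{Z}^m}\|\boldsymbol{y}-\boldsymbol{p}\|$. For $\psi:\mathbb{N}\to[0,\infty)$, $W_{m,n}(\psi)$ is the set of pairs $(A,\boldsymbol{\gamma})\in[0,1)^{m\times n}\times[0,1)^m$ such that $\langle A\boldsymbol{q}-\boldsymbol{\gamma}\rangle<\psi(\|\boldsymbol{q}\|)$ for infinitely many $\boldsymbol{q}\in\mathbb{Z}^n$. "Decreasing" means non-increasing. $\mathcal{D}$ is the set of decreasing $\psi:\mathbb{N}\to[0,\infty)$ with $\sum_{q\ge1}q^{n-1}\psi(q)^m=\infty$. $\Omega(m,n)=\bigcap_{\psi\in\mathcal{D}}W_{m,n}(\psi)$ and $\Omega^{\boldsymbol{\gamma}}(m,n)=\{A\in[0,1)^{m\times n}:(A,\boldsymbol{\gamma})\in\Omega(m,n)\}$. *)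

theory Defs
  imports "HOL-Analysis.Analysis"
begin

text \<open>Dimensions m and n are the cardinalities of finite index types 'm and 'n.
  Matrices A in R^{m x n} are real^'n^'m, vectors gamma are real^'m, q in Z^n is int^'n.\<close>

definition unit_cube :: "(real^'m) set" where
  "unit_cube = {g. \<forall>i. 0 \<le> g $ i \<and> g $ i < 1}"

definition unit_mat :: "(real^'n^'m) set" where
  "unit_mat = {A. \<forall>i j. 0 \<le> A $ i $ j \<and> A $ i $ j < 1}"

definition int_sup_norm :: "int^'n \<Rightarrow> nat" where
  "int_sup_norm q = nat (Max (range (\<lambda>i. \<bar>q $ i\<bar>)))"

definition real_sup_norm :: "real^'m \<Rightarrow> real" where
  "real_sup_norm y = Max (range (\<lambda>i. \<bar>y $ i\<bar>))"

definition dist_Zm :: "real^'m \<Rightarrow> real" where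
  "dist_Zm y = Inf (range (\<lambda>p::int^'m. real_sup_norm (y - (\<chi> i. real_of_int (p $ i)))))"

definition W_set :: "(nat \<Rightarrow> real) \<Rightarrow> ((real^'n^'m) \<times> (real^'m)) set" where
  "W_set \<psi> = {(A, g). A \<in> unit_mat \<and> g \<in> unit_cube \<and>
      infinite {q::int^'n. dist_Zm (A *v (\<chi> j. real_of_int (q $ j)) - g) < \<psi> (int_sup_norm q)}}"

definition D_class :: "'m::finite itself \<Rightarrow> 'n::finite itself \<Rightarrow> (nat \<Rightarrow> real) set" where
  "D_class _ _ = {\<psi>. (\<forall>q. 0 \<le> \<psi> q) \<and> (\<forall>a b. a \<le> b \<longrightarrow> \<psi> b \<le> \<psi> a) \<and>
      \<not> summable (\<lambda>k. real (Suc k) ^ (CARD('n) - 1) * \<psi> (Suc k) ^ CARD('m))}"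

definition Omega :: "((real^'n::finite^'m::finite) \<times> (real^'m)) set" where
  "Omega = (\<Inter>\<psi>\<in>D_class TYPE('m) TYPE('n). W_set \<psi>)"

definition Omega_gamma :: "real^'m \<Rightarrow> (real^'n^'m) set" where
  "Omega_gamma g = {A. A \<in> unit_mat \<and> (A, g) \<in> Omega}"

end

theory Submission
  imports Defs
begin

text \<open>If \<open>n \<ge> 2\<close>, the matrix whose first column is \<open>\<gamma>\<close> and whose other columns vanish
  solves \<open>A q = \<gamma>\<close> exactly for the infinitely many \<open>q = e1 + t e2\<close>; this suffices because
  every \<open>\<psi>\<close> in \<open>D\<close> is positive (a decreasing \<open>\<psi>\<close> vanishing somewhere has a convergent series).

  If \<open>n = 1\<close>, then \<open>m \<ge> 2\<close>. Put \<open>Q k = 2^(4^k)\<close>. A Liouville-type construction gives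
  \<open>a\<close> in \<open>[0,1)^m\<close> with \<open>\<langle>Q k a - \<gamma>\<rangle> \<le> Q k / Q (k+1) = Q k^(-3)\<close> for all \<open>k\<close>. If a decreasing
  \<open>\<psi>\<close> had \<open>\<psi> (Q k) \<le> Q k^(-3)\<close> for all large \<open>k\<close>, then on each block \<open>Q j \<le> q < Q j^4\<close>
  we would get \<open>\<psi> q^m \<le> \<psi> q^2 \<le> Q j^(-6) \<le> q^(-3/2)\<close>, so \<open>\<Sum> \<psi> q^m\<close> would converge.
  Hence every \<open>\<psi>\<close> in \<open>D\<close> exceeds \<open>Q k^(-3)\<close> at infinitely many \<open>Q k\<close>, where \<open>a\<close> is
  then \<open>\<psi>\<close>-approximable.\<close>

locale doubling_sequence =
  fixes Q :: "nat \<Rightarrow> nat"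
  assumes Q_0_pos: "0 < Q 0"
    and Q_doubling: "2 * Q k \<le> Q (Suc k)"
begin

lemma Q_ge_power_2: "2 ^ k \<le> Q k"
proof (induction k)
  case (Suc k)
  then have "2 * 2 ^ k \<le> 2 * Q k" by simp
  then show ?case using Q_doubling[of k] by simp
qed (use Q_0_pos in simp)

lemma Q_pos: "0 < Q k"
  using zero_less_power[of "2::nat" k] Q_ge_power_2[of k] by linarith

text \<open>\<open>approx_point c (k + 1)\<close> is the point of the grid \<open>(c + \<int>) / Q (k + 1)\<close> nearest to
  \<open>approx_point c k\<close>. The steps shrink geometrically, so the limit \<open>x\<close> stays within
  \<open>1 / Q (k + 1)\<close> of the \<open>k\<close>-th grid point, i.e. \<open>Q k x\<close> is within \<open>Q k / Q (k + 1)\<close> of \<open>c + \<int>\<close>.\<close>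

fun approx_point :: "real \<Rightarrow> nat \<Rightarrow> real" where
  "approx_point c 0 = c / Q 0"
| "approx_point c (Suc k) = (c + of_int (round (Q (Suc k) * approx_point c k - c))) / Q (Suc k)"

lemma approx_point_in_grid: "real (Q k) * approx_point c k - c \<in> \<int>"
  using Q_pos[of k] by (cases k) auto

lemma approx_point_step:
  "\<bar>approx_point c (Suc k) - approx_point c k\<bar> \<le> 1 / (2 * real (Q (Suc k)))"
proof -
  define y where "y = Q (Suc k) * approx_point c k - c"
  have Q: "real (Q (Suc k)) > 0" using Q_pos by simp
  have "\<bar>round y - y\<bar> \<le> 1 / 2"
    using of_int_round_le[of y] of_int_round_ge[of y] by linarith
  have "\<bar>approx_point c (Suc k) - approx_point c k\<bar> = \<bar>round y - y\<bar> / Q (Suc k)"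
    using Q by (simp add: y_def field_simps)
  also have "\<dots> \<le> (1 / 2) / Q (Suc k)"
    using \<open>\<bar>round y - y\<bar> \<le> 1 / 2\<close> Q by (intro divide_right_mono) auto
  finally show ?thesis by simp
qed

lemma approx_point_dist:
  assumes "k \<le> j"
  shows "\<bar>approx_point c j - approx_point c k\<bar> \<le> 1 / Q (Suc k) - 1 / Q (Suc j)"
  using assms
proof (induction j rule: dec_induct)
  case (step j)
  have "2 * real (Q (Suc j)) \<le> Q (Suc (Suc j))" using Q_doubling[of "Suc j"] by linarith
  then have "1 / Q (Suc (Suc j)) \<le> 1 / (2 * real (Q (Suc j)))"
    using Q_pos[of "Suc j"] by (intro divide_left_mono) auto
  then show ?case using step approx_point_step[of c j] by simp
qed simp

lemma approx_point_dist_le: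
  "k \<le> j \<Longrightarrow> \<bar>approx_point c j - approx_point c k\<bar> \<le> 1 / Q (Suc k)"
  using approx_point_dist[of k j c] by (smt (verit) of_nat_0_le_iff divide_nonneg_nonneg)

lemma approx_point_limit: "\<exists>x. \<forall>k. \<bar>x - approx_point c k\<bar> \<le> 1 / Q (Suc k)"
proof -
  have "Cauchy (approx_point c)"
  proof (rule metric_CauchyI)
    fix e :: real
    assume "e > 0"
    obtain M :: nat where "2 / e < M" using reals_Archimedean2 by blast
    also have "real M < Q (Suc M)"
      using Q_ge_power_2[of "Suc M"] less_exp[of "Suc M"] by linarith
    finally have "2 / Q (Suc M) < e"
      using \<open>e > 0\<close> Q_pos[of "Suc M"] by (simp add: field_simps)
    moreover have "dist (approx_point c m) (approx_point c n) \<le> 2 / Q (Suc M)"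
      if "M \<le> m" "M \<le> n" for m n
      using approx_point_dist_le[OF that(1), of c] approx_point_dist_le[OF that(2), of c]
      by (simp add: dist_real_def)
    ultimately show "\<exists>M. \<forall>m\<ge>M. \<forall>n\<ge>M. dist (approx_point c m) (approx_point c n) < e"
      by force
  qed
  then obtain x where x: "approx_point c \<longlonglongrightarrow> x"
    using Cauchy_convergent_iff convergent_def by blast
  have "\<bar>x - approx_point c k\<bar> \<le> 1 / Q (Suc k)" for k
  proof (rule LIMSEQ_le_const2)
    show "(\<lambda>j. \<bar>approx_point c j - approx_point c k\<bar>) \<longlonglongrightarrow> \<bar>x - approx_point c k\<bar>"
      by (intro tendsto_intros x)
  qed (use approx_point_dist_le in blast)
  then show ?thesis by blast
qed

lemma exists_approximation:
  fixes c :: real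
  shows "\<exists>x::real. 0 \<le> x \<and> x < 1 \<and>
    (\<forall>k. \<exists>p::int. \<bar>real (Q k) * x - c - p\<bar> \<le> Q k / Q (Suc k))"
proof -
  obtain x where x: "\<And>k. \<bar>x - approx_point c k\<bar> \<le> 1 / Q (Suc k)"
    using approx_point_limit by blast
  have "\<exists>p::int. \<bar>Q k * frac x - c - p\<bar> \<le> Q k / Q (Suc k)" for k
  proof -
    obtain r where r: "Q k * approx_point c k - c = of_int r"
      using approx_point_in_grid[of k c] Ints_cases by metis
    have "Q k * frac x - c - of_int (r - Q k * \<lfloor>x\<rfloor>) = Q k * (x - approx_point c k)"
      using r by (simp add: frac_def algebra_simps)
    then have "\<bar>Q k * frac x - c - of_int (r - Q k * \<lfloor>x\<rfloor>)\<bar> = Q k * \<bar>x - approx_point c k\<bar>"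
      by (simp add: abs_mult)
    also have "\<dots> \<le> Q k * (1 / Q (Suc k))"
      using x[of k] by (intro mult_left_mono) auto
    finally have "\<bar>Q k * frac x - c - of_int (r - Q k * \<lfloor>x\<rfloor>)\<bar> \<le> Q k / Q (Suc k)"
      by simp
    then show ?thesis by blast
  qed
  then show ?thesis
    by (intro exI[of _ "frac x"]) (simp add: frac_lt_1)
qed

end

definition tower :: "nat \<Rightarrow> nat" where
  "tower k = 2 ^ 4 ^ k"

lemma tower_Suc: "tower (Suc k) = tower k ^ 4"
  unfolding tower_def by (simp only: power_Suc mult.commute[of 4] power_mult)

lemma tower_pos: "0 < tower k"
  by (simp add: tower_def)

lemma tower_ge_2: "2 \<le> tower k"
  unfolding tower_def using power_increasing[of 1 "4 ^ k" "2::nat"] by simp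

lemma tower_doubling: "2 * tower k \<le> tower (Suc k)"
proof -
  have "8 \<le> tower k ^ 3"
    using power_mono[OF tower_ge_2[of k], of 3] by simp
  then have "tower k * 2 \<le> tower k * tower k ^ 3" by simp
  then show ?thesis by (simp add: tower_Suc eval_nat_numeral mult.commute)
qed

interpretation tower: doubling_sequence tower
  using tower_pos tower_doubling by unfold_locales

lemma tower_gt: "k < tower k"
  using tower.Q_ge_power_2[of k] less_exp[of k] by linarith

lemma strict_mono_tower: "strict_mono tower"
  unfolding strict_mono_Suc_iff
proof
  fix k
  show "tower k < tower (Suc k)" using tower_doubling[of k] tower_ge_2[of k] by linarith
qed

lemma exists_bracketing_index:
  fixes Q :: "nat \<Rightarrow> nat"
  assumes "K \<le> N" and "Q K \<le> q" and "q < Q N"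
  shows "\<exists>j\<ge>K. Q j \<le> q \<and> q < Q (Suc j)"
  using assms
proof (induction N rule: dec_induct)
  case (step n)
  then show ?case by (cases "q < Q n") auto
qed simp

lemma tower_ratio_power_le:
  assumes "tower j \<le> q" and "q < tower (Suc j)"
    and "0 \<le> x" and "x \<le> tower j / tower (Suc j)" and "2 \<le> M"
  shows "x ^ M \<le> real q powr (-3/2)"
proof -
  define Q where "Q = real (tower j)"
  have "Q \<ge> 2" using tower_ge_2[of j] by (simp add: Q_def)
  have "x \<le> 1 / Q ^ 3"
    using assms(4) \<open>Q \<ge> 2\<close> by (simp add: Q_def tower_Suc eval_nat_numeral)
  also have "\<dots> \<le> 1"
    using \<open>Q \<ge> 2\<close> by simp
  finally have "x ^ M \<le> x ^ 2"
    using assms(3,5) by (intro power_decreasing) auto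
  also have "\<dots> \<le> (1 / Q ^ 3) ^ 2"
    using assms(3) \<open>x \<le> 1 / Q ^ 3\<close> by (intro power_mono) auto
  also have "\<dots> = 1 / (Q ^ 4) powr (3/2)"
  proof -
    have "(Q ^ 4) powr (3/2) = (Q powr 4) powr (3/2)"
      using \<open>Q \<ge> 2\<close> by simp
    also have "\<dots> = Q ^ 6"
      unfolding powr_powr using \<open>Q \<ge> 2\<close> by simp
    finally show ?thesis by (simp add: power_divide flip: power_mult)
  qed
  also have "\<dots> \<le> 1 / real q powr (3/2)"
  proof -
    have "real q \<le> Q ^ 4" using assms(2) by (simp add: Q_def tower_Suc)
    moreover have "0 < real q" using assms(1) tower_ge_2[of j] by simp
    ultimately show ?thesis by (intro divide_left_mono powr_mono2 mult_pos_pos) auto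
  qed
  also have "\<dots> = real q powr (-3/2)"
    by (simp add: powr_minus_divide)
  finally show ?thesis .
qed

lemma tower_ratio_frequently_below:
  fixes \<psi> :: "nat \<Rightarrow> real"
  assumes "\<And>q. 0 \<le> \<psi> q" and "antimono \<psi>"
    and "\<not> summable (\<lambda>q. \<psi> q ^ M)" and "2 \<le> M"
  shows "infinite {k. tower k / tower (Suc k) < \<psi> (tower k)}"
proof
  assume "finite {k. tower k / tower (Suc k) < \<psi> (tower k)}"
  then obtain B where B: "\<And>k. tower k / tower (Suc k) < \<psi> (tower k) \<Longrightarrow> k \<le> B"
    unfolding finite_nat_set_iff_bounded_le by blast
  have below: "\<psi> (tower k) \<le> tower k / tower (Suc k)" if "B < k" for k
    using B[of k] that by linarith
  have "summable (\<lambda>q. \<psi> q ^ M)"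
  proof (rule summable_comparison_test'[where N="tower (Suc B)"])
    show "summable (\<lambda>q. real q powr (-3/2))"
      by (simp add: summable_real_powr_iff)
    fix q
    assume "tower (Suc B) \<le> q"
    then obtain j where j: "Suc B \<le> j" "tower j \<le> q" "q < tower (Suc j)"
      using exists_bracketing_index[where Q=tower and K="Suc B" and N=q]
        tower_gt[of "Suc B"] tower_gt[of q]
      by fastforce
    have "\<psi> q \<le> tower j / tower (Suc j)"
      using antimonoD[OF assms(2) j(2)] below[of j] j(1) by linarith
    then show "norm (\<psi> q ^ M) \<le> real q powr (-3/2)"
      using tower_ratio_power_le[OF j(2,3) assms(1) _ assms(4)] assms(1) by simp
  qed
  then show False using assms(3) by blast
qed

lemma real_sup_norm_nonneg: "0 \<le> real_sup_norm y"
  unfolding real_sup_norm_def by (rule order_trans[OF abs_ge_zero Max_ge]) auto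

lemma dist_Zm_le:
  fixes y :: "real^'m::finite"
  assumes "\<And>i. \<exists>p::int. \<bar>y $ i - p\<bar> \<le> e"
  shows "dist_Zm y \<le> e"
proof -
  obtain p :: "'m \<Rightarrow> int" where p: "\<And>i. \<bar>y $ i - p i\<bar> \<le> e"
    using assms by metis
  let ?dist = "\<lambda>p::int^'m. real_sup_norm (y - (\<chi> i. real_of_int (p $ i)))"
  have "real_sup_norm (y - (\<chi> i. real_of_int (p i))) \<in> range ?dist"
    by (rule range_eqI[where x="\<chi> i. p i"]) simp
  moreover have "bdd_below (range ?dist)"
    using real_sup_norm_nonneg by (intro bdd_belowI[where m=0]) blast
  ultimately have "dist_Zm y \<le> real_sup_norm (y - (\<chi> i. real_of_int (p i)))"
    unfolding dist_Zm_def by (rule cInf_lower)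
  also have "\<dots> \<le> e"
    unfolding real_sup_norm_def using p by (subst Max_le_iff) auto
  finally show ?thesis .
qed

lemma int_sup_norm_const: "int_sup_norm ((\<chi> j. int N) :: int^'n) = N"
proof -
  have "range (\<lambda>j. \<bar>((\<chi> j. int N) :: int^'n) $ j\<bar>) = {int N}" by auto
  then show ?thesis unfolding int_sup_norm_def by simp
qed

lemma D_class_pos:
  assumes "\<psi> \<in> D_class TYPE('m::finite) TYPE('n::finite)"
  shows "0 < \<psi> q"
proof (rule ccontr)
  assume "\<not> 0 < \<psi> q"
  have nonneg: "\<And>k. 0 \<le> \<psi> k" and decr: "\<And>k. q \<le> k \<Longrightarrow> \<psi> k \<le> \<psi> q"
    using assms unfolding D_class_def by auto
  have vanish: "\<psi> k = 0" if "q \<le> k" for k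
    using nonneg[of k] decr[OF that] \<open>\<not> 0 < \<psi> q\<close> by linarith
  have "summable (\<lambda>k. real (Suc k) ^ (CARD('n) - 1) * \<psi> (Suc k) ^ CARD('m))"
  proof (rule summable_comparison_test'[where g="\<lambda>_. 0" and N=q])
    fix k
    assume "q \<le> k"
    then show "norm (real (Suc k) ^ (CARD('n) - 1) * \<psi> (Suc k) ^ CARD('m)) \<le> 0"
      using vanish[of "Suc k"] by (simp add: zero_power zero_less_card_finite)
  qed simp
  then show False using assms unfolding D_class_def by blast
qed

lemma Omega_gammaI:
  fixes A :: "real^'n::finite^'m::finite"
  assumes "A \<in> unit_mat" and "g \<in> unit_cube"
    and "\<And>\<psi>. \<psi> \<in> D_class TYPE('m) TYPE('n) \<Longrightarrow>
      infinite {q. dist_Zm (A *v (\<chi> j. real_of_int (q $ j)) - g) < \<psi> (int_sup_norm q)}"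
  shows "A \<in> Omega_gamma g"
  using assms unfolding Omega_gamma_def Omega_def W_set_def by blast

lemma Omega_gammaI_exact:
  fixes A :: "real^'n::finite^'m::finite"
  assumes "A \<in> unit_mat" and "g \<in> unit_cube"
    and "infinite {q. A *v (\<chi> j. real_of_int (q $ j)) = g}"
  shows "A \<in> Omega_gamma g"
proof (rule Omega_gammaI[OF assms(1,2)])
  fix \<psi> :: "nat \<Rightarrow> real"
  assume "\<psi> \<in> D_class TYPE('m) TYPE('n)"
  have "dist_Zm (0 :: real^'m) \<le> 0"
    by (rule dist_Zm_le) (intro exI[of _ 0], simp)
  then have "{q. A *v (\<chi> j. real_of_int (q $ j)) = g}
      \<subseteq> {q. dist_Zm (A *v (\<chi> j. real_of_int (q $ j)) - g) < \<psi> (int_sup_norm q)}"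
    using D_class_pos[OF \<open>\<psi> \<in> D_class TYPE('m) TYPE('n)\<close>] by (auto intro: le_less_trans)
  then show "infinite {q. dist_Zm (A *v (\<chi> j. real_of_int (q $ j)) - g) < \<psi> (int_sup_norm q)}"
    using assms(3) infinite_super by blast
qed

lemma column_matrix_in_Omega_gamma:
  fixes g :: "real^'m::finite" and j1 j2 :: "'n::finite"
  assumes "j1 \<noteq> j2" and "g \<in> unit_cube"
  shows "(\<chi> i j. if j = j1 then g $ i else 0 :: real^'n^'m) \<in> Omega_gamma g"
    (is "?A \<in> _")
proof (rule Omega_gammaI_exact)
  show "?A \<in> unit_mat" using assms(2) unfolding unit_mat_def unit_cube_def by auto
  define v :: "nat \<Rightarrow> int^'n" where
    "v t = (\<chi> j. if j = j1 then 1 else if j = j2 then int t else 0)" for t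
  have "inj v"
  proof (rule injI)
    fix s t
    assume "v s = v t"
    then have "v s $ j2 = v t $ j2" by simp
    then show "s = t" using assms(1) unfolding v_def by auto
  qed
  have "?A *v (\<chi> j. real_of_int (v t $ j)) = g" for t
    unfolding v_def matrix_vector_mult_def
    by (simp add: vec_eq_iff if_distrib[of "\<lambda>x. x * _"] cong: if_cong)
  then have "range v \<subseteq> {q. ?A *v (\<chi> j. real_of_int (q $ j)) = g}" by auto
  then show "infinite {q. ?A *v (\<chi> j. real_of_int (q $ j)) = g}"
    using \<open>inj v\<close> infinite_super range_inj_infinite by blast
qed (fact assms(2))

lemma constant_rows_in_Omega_gamma:
  fixes g :: "real^'m::finite" and a :: "'m \<Rightarrow> real"
  assumes "CARD('n::finite) = 1" and "2 \<le> CARD('m)" and "g \<in> unit_cube"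
    and "\<And>i. 0 \<le> a i \<and> a i < 1"
    and "\<And>i k. \<exists>p::int. \<bar>real (tower k) * a i - g $ i - p\<bar> \<le> tower k / tower (Suc k)"
  shows "(\<chi> i j. a i :: real^'n^'m) \<in> Omega_gamma g"
    (is "?A \<in> _")
proof (rule Omega_gammaI)
  show "?A \<in> unit_mat" using assms(4) unfolding unit_mat_def by auto
  fix \<psi> :: "nat \<Rightarrow> real"
  assume \<psi>: "\<psi> \<in> D_class TYPE('m) TYPE('n)"
  define v :: "nat \<Rightarrow> int^'n" where "v k = (\<chi> j. int (tower k))" for k
  define S where "S = {k. tower k / tower (Suc k) < \<psi> (tower k)}"
  have "infinite S"
    unfolding S_def
  proof (rule tower_ratio_frequently_below[OF _ _ _ assms(2)])
    show "\<And>q. 0 \<le> \<psi> q" "antimono \<psi>"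
      using \<psi> unfolding D_class_def antimono_def by auto
    show "\<not> summable (\<lambda>q. \<psi> q ^ CARD('m))"
      using \<psi> assms(1) summable_Suc_iff[of "\<lambda>q. \<psi> q ^ CARD('m)"]
      unfolding D_class_def by simp
  qed
  have "inj v"
    using strict_mono_tower unfolding v_def by (intro injI) (simp add: vec_eq_iff strict_mono_eq)
  have "dist_Zm (?A *v (\<chi> j. real_of_int (v k $ j)) - g) < \<psi> (int_sup_norm (v k))"
    if "k \<in> S" for k
  proof -
    have "(?A *v (\<chi> j. real_of_int (v k $ j))) $ i = tower k * a i" for i
      unfolding v_def matrix_vector_mult_def using assms(1) by simp
    then have "dist_Zm (?A *v (\<chi> j. real_of_int (v k $ j)) - g) \<le> tower k / tower (Suc k)"
      using assms(5) by (intro dist_Zm_le) simp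
    also have "\<dots> < \<psi> (tower k)" using that unfolding S_def by simp
    finally show ?thesis unfolding v_def int_sup_norm_const .
  qed
  then have "v ` S \<subseteq> {q. dist_Zm (?A *v (\<chi> j. real_of_int (q $ j)) - g) < \<psi> (int_sup_norm q)}"
    by auto
  moreover have "infinite (v ` S)"
    using \<open>infinite S\<close> \<open>inj v\<close> by (simp add: finite_image_iff inj_on_subset)
  ultimately show "infinite {q. dist_Zm (?A *v (\<chi> j. real_of_int (q $ j)) - g) < \<psi> (int_sup_norm q)}"
    using infinite_super by blast
qed (fact assms(3))

theorem corollary1p1:
  fixes g :: "real^'m"
  assumes "CARD('m) * CARD('n) > 1"
    and "g \<in> unit_cube"
  shows "(Omega_gamma g :: (real^'n^'m) set) \<noteq> {}"
proof (cases "CARD('n) \<ge> 2")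
  case True
  have "\<exists>j1 j2 :: 'n. j1 \<noteq> j2"
  proof (rule ccontr)
    assume "\<nexists>j1 j2 :: 'n. j1 \<noteq> j2"
    then have "(UNIV :: 'n set) = {undefined}" by auto
    then show False using True card_1_singleton_iff[of "UNIV :: 'n set"] by auto
  qed
  then show ?thesis using column_matrix_in_Omega_gamma[OF _ assms(2)] by blast
next
  case False
  then have "CARD('n) = 1" using zero_less_card_finite[where 'a='n] by linarith
  moreover from this have "2 \<le> CARD('m)" using assms(1) by simp
  moreover have "\<forall>i. \<exists>x. 0 \<le> x \<and> x < 1 \<and>
      (\<forall>k. \<exists>p::int. \<bar>real (tower k) * x - g $ i - p\<bar> \<le> tower k / tower (Suc k))"
    using tower.exists_approximation by blast
  then obtain a :: "'m \<Rightarrow> real" where "\<forall>i. 0 \<le> a i \<and> a i < 1 \<and>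
      (\<forall>k. \<exists>p::int. \<bar>real (tower k) * a i - g $ i - p\<bar> \<le> tower k / tower (Suc k))"
    by metis
  ultimately show ?thesis using constant_rows_in_Omega_gamma[OF _ _ assms(2), of a] by blast
qed

end
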